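(* Let $\Omega = \mathbb{R}^2/(2\pi\mathbb{Z})^2$ be the flat two-dimensional torus, let $\tau>0$ and $\lambda>0$, let $f$ be a given image on $\Omega$, let $\mathcal{S}$ be a set (the admissible parameter set), and let $F_1, F_2$ be maps assigning to each $\Theta\in\mathcal{S}$ real-valued functions $x\mapsto F_1(f,\Theta)(x)$, $x\mapsto F_2(f,\Theta)(x)$ in $L^1(\Omega)$. For measurable $u:\Omega\to\{0,1\}$ and $\Theta\in\mathcal{S}$ define $$\mathcal{E}^\tau(u,\Theta) = \int_\Omega \big[u\,F_1(f,\Theta) + (1-u)\,F_2(f,\Theta)\big]\,dx + \lambda\sqrt{\tfrac{\pi}{\tau}}\int_\Omega u\, \big(G_\tau*(1-u)\big)\,dx .$$ Let $(u^k,\Theta^k)_{k\ge 1}$ be any sequence generated by the following iteration (the two-phase ICTM), starting from a measurable $u^1:\Omega\to\{0,1\}$: (1) $\Theta^k \in \arg\min_{\Theta\in\mathcal{S}} \int_\Omega \big[u^k F_1(f,\Theta) + (1-u^k)F_2(f,\Theta)\big]\,dx$ (a minimizer is assumed to exist at every step); (2) $\phi^k = F_1(f,\Theta^k) - F_2(f,\Theta^k) + \lambda\sqrt{\tfrac{\pi}{\tau}}\, G_\tau*(1-2u^k)$; (3) $u^{k+1}(x) = 1$ if $\phi^k(x)\le 0$ and $u^{k+1}(x)=0$ otherwise. Then for every $k\ge1$ and every $\tau>0$, $$\mathcal{E}^\tau(u^{k+1},\Theta^{k+1}) \le \mathcal{E}^\tau(u^k,\Theta^k).$$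
   Context: $G_\tau$ denotes the heat kernel on the torus $\Omega$, i.e. the $2\pi\mathbb{Z}^2$-periodization $G_\tau(x)=\sum_{m\in\mathbb{Z}^2}\frac{1}{4\pi\tau}\exp\!\big(-\frac{|x+2\pi m|^2}{4\tau}\big)$ of the Gaussian $\frac{1}{4\pi\tau}e^{-|x|^2/(4\tau)}$, and $*$ is convolution on $\Omega$: $(G_\tau*v)(x)=\int_\Omega G_\tau(x-y)v(y)\,dy$. The term $\sqrt{\pi/\tau}\int_\Omega u\,G_\tau*(1-u)\,dx$ is the paper's heat-kernel approximation of the perimeter of the set $\{u=1\}$; $F_1,F_2$ are the fidelity integrands of a general two-phase segmentation energy, and $\Theta$ collects all parameters/functions appearing in them. *)

theory Defs
  imports "HOL-Analysis.Analysis"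
begin

text \<open>The torus R^2/(2 pi Z)^2 is represented by the fundamental cell
  [0,2pi]^2 (a measure-zero boundary is irrelevant); functions on the torus are
  functions on real x real, of which only the values on the cell matter,
  since the heat kernel below is 2pi-periodic.\<close>

definition Omega :: "(real \<times> real) set" where
  "Omega = cbox (0, 0) (2 * pi, 2 * pi)"

definition heat_kernel :: "real \<Rightarrow> real \<times> real \<Rightarrow> real" where
  "heat_kernel \<tau> x =
     (\<Sum>\<^sub>\<infinity> m \<in> (UNIV :: (int \<times> int) set).
        1 / (4 * pi * \<tau>) *
        exp (- (norm (x + (2 * pi) *\<^sub>R (real_of_int (fst m), real_of_int (snd m))))\<^sup>2 / (4 * \<tau>)))"

definition tconv :: "(real \<times> real \<Rightarrow> real) \<Rightarrow> (real \<times> real \<Rightarrow> real) \<Rightarrow> real \<times> real \<Rightarrow> real" where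
  "tconv g v x = integral\<^sup>L (lebesgue_on Omega) (\<lambda>y. g (x - y) * v y)"

definition fidelity ::
  "('i \<Rightarrow> 'p \<Rightarrow> real \<times> real \<Rightarrow> real) \<Rightarrow> ('i \<Rightarrow> 'p \<Rightarrow> real \<times> real \<Rightarrow> real) \<Rightarrow> 'i
    \<Rightarrow> (real \<times> real \<Rightarrow> real) \<Rightarrow> 'p \<Rightarrow> real" where
  "fidelity F1 F2 f u \<Theta> =
     integral\<^sup>L (lebesgue_on Omega) (\<lambda>x. u x * F1 f \<Theta> x + (1 - u x) * F2 f \<Theta> x)"

definition energy ::
  "real \<Rightarrow> real \<Rightarrow> ('i \<Rightarrow> 'p \<Rightarrow> real \<times> real \<Rightarrow> real) \<Rightarrow> ('i \<Rightarrow> 'p \<Rightarrow> real \<times> real \<Rightarrow> real)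
    \<Rightarrow> 'i \<Rightarrow> (real \<times> real \<Rightarrow> real) \<Rightarrow> 'p \<Rightarrow> real" where
  "energy \<tau> lam F1 F2 f u \<Theta> =
     fidelity F1 F2 f u \<Theta>
     + lam * sqrt (pi / \<tau>) *
       integral\<^sup>L (lebesgue_on Omega) (\<lambda>x. u x * tconv (heat_kernel \<tau>) (\<lambda>y. 1 - u y) x)"

definition ictm_phi ::
  "real \<Rightarrow> real \<Rightarrow> ('i \<Rightarrow> 'p \<Rightarrow> real \<times> real \<Rightarrow> real) \<Rightarrow> ('i \<Rightarrow> 'p \<Rightarrow> real \<times> real \<Rightarrow> real)
    \<Rightarrow> 'i \<Rightarrow> (real \<times> real \<Rightarrow> real) \<Rightarrow> 'p \<Rightarrow> real \<times> real \<Rightarrow> real" where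
  "ictm_phi \<tau> lam F1 F2 f u \<Theta> x =
     F1 f \<Theta> x - F2 f \<Theta> x + lam * sqrt (pi / \<tau>) * tconv (heat_kernel \<tau>) (\<lambda>y. 1 - 2 * u y) x"

end

theory Submission
  imports Defs "HOL-Library.Nat_Bijection" "HOL-Probability.Distributions"
begin

text \<open>
  Minimising over Theta can only lower the fidelity, so it suffices that thresholding lowers
  E(., Theta^k). Write <a, b> = \<integral> a (G_tau * b). This form is symmetric, and it is positive
  semidefinite because G_tau = G_(tau/2) * G_(tau/2) on the torus, so that
  <w, w> = \<parallel>G_(tau/2) * w\<parallel>^2. Hence the perimeter term <u, 1 - u> is concave, and
  E(., Theta^k) lies below its linearisation at u^k, whose u-dependent part is \<integral> u phi^k.
  Over {0,1}-valued u this linear functional is minimised by the indicator of {phi^k \<le> 0},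
  which is u^(k+1).

  The semigroup identity is proved by unfolding the periodisation: the lattice translates of
  the cell tile the plane, which turns the convolution over the torus into a convolution of
  two Gaussians over the plane.
\<close>

section \<open>The heat kernel as a lattice sum\<close>

definition lattice_point :: "int \<times> int \<Rightarrow> real \<times> real" where
  "lattice_point m = (2 * pi * real_of_int (fst m), 2 * pi * real_of_int (snd m))"

definition gaussian :: "real \<Rightarrow> real \<times> real \<Rightarrow> real" where
  "gaussian s z = 1 / (4 * pi * s) * exp (- (norm z)\<^sup>2 / (4 * s))"

text \<open>The lattice sum as an integral over the counting measure with values in \<open>ennreal\<close>, so that
  sums can be reordered and interchanged with integrals without summability side conditions.\<close>

definition heat_kernel_nn :: "real \<Rightarrow> real \<times> real \<Rightarrow> ennreal" where
  "heat_kernel_nn s z = (\<integral>\<^sup>+ m. ennreal (gaussian s (z + lattice_point m)) \<partial>count_space UNIV)"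

lemma heat_kernel_eq_infsum: "heat_kernel s z = (\<Sum>\<^sub>\<infinity> m. gaussian s (z + lattice_point m))"
  unfolding heat_kernel_def gaussian_def lattice_point_def by (simp add: scaleR_Pair)

lemma gaussian_nonneg: "s > 0 \<Longrightarrow> gaussian s z \<ge> 0"
  unfolding gaussian_def by simp

lemma gaussian_measurable [measurable]: "gaussian s \<in> borel_measurable borel"
  unfolding gaussian_def by measurable

lemma lattice_point_measurable [measurable]: "lattice_point \<in> measurable (count_space UNIV) borel"
  by simp

lemma lattice_point_add: "lattice_point (a + b) = lattice_point a + lattice_point b"
  by (cases a; cases b) (simp add: lattice_point_def algebra_simps)

lemma count_space_prod_countable:
  "count_space (UNIV :: ('a::countable \<times> 'b::countable) set) = count_space UNIV \<Otimes>\<^sub>M count_space UNIV"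
  by (simp add: pair_measure_countable)

lemma abs_int_decode_ge: "real k / 2 - 1/2 \<le> \<bar>real_of_int (int_decode k)\<bar>"
  unfolding int_decode_def sum_decode_def
  by (cases "even k") (auto elim!: evenE oddE simp: field_simps)

lemma nn_integral_exp_neg_abs_int_finite:
  "(\<integral>\<^sup>+ n. ennreal (exp (- \<bar>real_of_int n\<bar>)) \<partial>count_space (UNIV::int set)) < \<infinity>"
proof -
  have "(\<integral>\<^sup>+ n. ennreal (exp (- \<bar>real_of_int n\<bar>)) \<partial>count_space (UNIV::int set))
      = (\<Sum>k. ennreal (exp (- \<bar>real_of_int (int_decode k)\<bar>)))"
    by (subst nn_integral_bij_count_space[symmetric, OF bij_int_decode])
       (simp add: nn_integral_count_space_nat)
  also have "\<dots> \<le> (\<Sum>k. ennreal (exp (1/2) * exp (-1/2) ^ k))"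
  proof (intro suminf_le ennreal_leI)
    fix k :: nat
    have "exp (- \<bar>real_of_int (int_decode k)\<bar>) \<le> exp (1/2 - real k / 2)"
      using abs_int_decode_ge[of k] by simp
    also have "\<dots> = exp (1/2) * exp (-1/2) ^ k"
      by (simp add: exp_of_nat_mult[symmetric] exp_add[symmetric] field_simps)
    finally show "exp (- \<bar>real_of_int (int_decode k)\<bar>) \<le> exp (1/2) * exp (-1/2) ^ k" .
  qed auto
  also have "\<dots> = ennreal (\<Sum>k. exp (1/2) * exp (-1/2) ^ k)"
    by (rule suminf_ennreal2) (auto intro!: summable_mult summable_geometric)
  also have "\<dots> < \<infinity>" by simp
  finally show ?thesis .
qed

lemma nn_integral_exp_neg_abs_int_pair_finite:
  "(\<integral>\<^sup>+ m. ennreal (exp (- \<bar>real_of_int (fst m)\<bar>) * exp (- \<bar>real_of_int (snd m)\<bar>))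
      \<partial>count_space (UNIV::(int \<times> int) set)) < \<infinity>"
proof -
  interpret c: sigma_finite_measure "count_space (UNIV::int set)"
    by (rule sigma_finite_measure_count_space_countable) simp
  have "(\<integral>\<^sup>+ m. ennreal (exp (- \<bar>real_of_int (fst m)\<bar>) * exp (- \<bar>real_of_int (snd m)\<bar>))
          \<partial>count_space (UNIV::(int \<times> int) set))
     = (\<integral>\<^sup>+ m1. \<integral>\<^sup>+ m2. ennreal (exp (- \<bar>real_of_int m1\<bar>)) * ennreal (exp (- \<bar>real_of_int m2\<bar>))
          \<partial>count_space UNIV \<partial>count_space UNIV)"
    unfolding count_space_prod_countable
    by (subst c.nn_integral_fst[symmetric]) (auto simp: ennreal_mult')
  also have "\<dots> = (\<integral>\<^sup>+ m1. ennreal (exp (- \<bar>real_of_int m1\<bar>)) \<partial>count_space UNIV) *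
                  (\<integral>\<^sup>+ m2. ennreal (exp (- \<bar>real_of_int m2\<bar>)) \<partial>count_space UNIV)"
    by (simp add: nn_integral_cmult nn_integral_multc)
  also have "\<dots> < \<infinity>"
    using nn_integral_exp_neg_abs_int_finite by (simp add: ennreal_mult_less_top)
  finally show ?thesis .
qed

lemma exp_neg_shifted_square_le:
  fixes a s A :: real and n :: int
  assumes s: "s > 0" and a: "\<bar>a\<bar> \<le> A"
  shows "exp (- (a + 2 * pi * real_of_int n)\<^sup>2 / (4 * s)) \<le> exp (s + A) * exp (- \<bar>real_of_int n\<bar>)"
proof -
  define y where "y = a + 2 * pi * real_of_int n"
  have "0 \<le> (\<bar>y\<bar> - 2 * s)\<^sup>2" by simp
  hence "y\<^sup>2 \<ge> 4 * s * \<bar>y\<bar> - 4 * s\<^sup>2" by (simp add: power2_eq_square algebra_simps)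
  hence quadratic: "y\<^sup>2 / (4 * s) \<ge> \<bar>y\<bar> - s" using s by (simp add: field_simps power2_eq_square)
  have "1 * \<bar>real_of_int n\<bar> \<le> (2 * pi) * \<bar>real_of_int n\<bar>"
    using pi_gt3 by (intro mult_right_mono) auto
  hence "\<bar>y\<bar> \<ge> \<bar>real_of_int n\<bar> - A" unfolding y_def using a by (simp add: abs_mult)
  hence "- y\<^sup>2 / (4 * s) \<le> s + A + (- \<bar>real_of_int n\<bar>)" using quadratic by simp
  hence "exp (- y\<^sup>2 / (4 * s)) \<le> exp (s + A + (- \<bar>real_of_int n\<bar>))" by simp
  thus ?thesis unfolding y_def exp_add .
qed

lemma gaussian_lattice_shift_le:
  assumes s: "s > 0" and z: "\<bar>fst z\<bar> \<le> A" "\<bar>snd z\<bar> \<le> A"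
  shows "gaussian s (z + lattice_point m) \<le> (1 / (4 * pi * s) * exp (s + A) * exp (s + A)) *
           (exp (- \<bar>real_of_int (fst m)\<bar>) * exp (- \<bar>real_of_int (snd m)\<bar>))"
proof -
  obtain a b where zab: "z = (a, b)" by (cases z)
  obtain m1 m2 where mm: "m = (m1, m2)" by (cases m)
  have split: "exp (- (norm (z + lattice_point m))\<^sup>2 / (4 * s)) =
      exp (- (a + 2 * pi * real_of_int m1)\<^sup>2 / (4 * s)) * exp (- (b + 2 * pi * real_of_int m2)\<^sup>2 / (4 * s))"
    unfolding zab mm lattice_point_def
    by (simp add: norm_Pair exp_add[symmetric] add_divide_distrib diff_divide_distrib)
  have "exp (- (norm (z + lattice_point m))\<^sup>2 / (4 * s))
     \<le> (exp (s + A) * exp (- \<bar>real_of_int m1\<bar>)) * (exp (s + A) * exp (- \<bar>real_of_int m2\<bar>))"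
    unfolding split using z zab by (intro mult_mono exp_neg_shifted_square_le s) auto
  hence "1 / (4 * pi * s) * exp (- (norm (z + lattice_point m))\<^sup>2 / (4 * s))
      \<le> 1 / (4 * pi * s) * ((exp (s + A) * exp (- \<bar>real_of_int m1\<bar>)) * (exp (s + A) * exp (- \<bar>real_of_int m2\<bar>)))"
    using s by (intro mult_left_mono) auto
  thus ?thesis unfolding gaussian_def mm by (simp add: mult_ac)
qed

lemma heat_kernel_nn_le:
  assumes s: "s > 0" and z: "\<bar>fst z\<bar> \<le> A" "\<bar>snd z\<bar> \<le> A"
  shows "heat_kernel_nn s z \<le> ennreal (1 / (4 * pi * s) * exp (s + A) * exp (s + A)) *
     (\<integral>\<^sup>+ m. ennreal (exp (- \<bar>real_of_int (fst m)\<bar>) * exp (- \<bar>real_of_int (snd m)\<bar>))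
        \<partial>count_space (UNIV::(int \<times> int) set))"
proof -
  let ?C = "1 / (4 * pi * s) * exp (s + A) * exp (s + A)"
  have "ennreal (gaussian s (z + lattice_point m))
      \<le> ennreal ?C * ennreal (exp (- \<bar>real_of_int (fst m)\<bar>) * exp (- \<bar>real_of_int (snd m)\<bar>))" for m
    using gaussian_lattice_shift_le[OF s z, of m] s by (subst ennreal_mult[symmetric]) (auto intro: ennreal_leI)
  hence "heat_kernel_nn s z \<le> (\<integral>\<^sup>+ m. ennreal ?C *
      ennreal (exp (- \<bar>real_of_int (fst m)\<bar>) * exp (- \<bar>real_of_int (snd m)\<bar>)) \<partial>count_space UNIV)"
    unfolding heat_kernel_nn_def by (intro nn_integral_mono)
  thus ?thesis by (simp add: nn_integral_cmult)
qed

lemma heat_kernel_nn_bounded: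
  assumes "s > 0"
  obtains B where "B < \<infinity>" "\<And>z. \<bar>fst z\<bar> \<le> A \<Longrightarrow> \<bar>snd z\<bar> \<le> A \<Longrightarrow> heat_kernel_nn s z \<le> B"
proof -
  let ?B = "ennreal (1 / (4 * pi * s) * exp (s + A) * exp (s + A)) *
     (\<integral>\<^sup>+ m. ennreal (exp (- \<bar>real_of_int (fst m)\<bar>) * exp (- \<bar>real_of_int (snd m)\<bar>))
        \<partial>count_space (UNIV::(int \<times> int) set))"
  have "?B < \<infinity>"
    using nn_integral_exp_neg_abs_int_pair_finite by (simp add: ennreal_mult_less_top)
  thus ?thesis using that heat_kernel_nn_le[OF assms] by blast
qed

lemma heat_kernel_nn_finite:
  assumes "s > 0" shows "heat_kernel_nn s z < \<infinity>"
proof -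
  obtain B where "B < \<infinity>"
    and "\<And>y. \<bar>fst y\<bar> \<le> max \<bar>fst z\<bar> \<bar>snd z\<bar> \<Longrightarrow> \<bar>snd y\<bar> \<le> max \<bar>fst z\<bar> \<bar>snd z\<bar> \<Longrightarrow> heat_kernel_nn s y \<le> B"
    using heat_kernel_nn_bounded[OF assms] by blast
  thus ?thesis by (meson le_less_trans max.cobounded1 max.cobounded2)
qed

lemma ennreal_infsum_nonneg:
  fixes f :: "'a::countable \<Rightarrow> real"
  assumes nonneg: "\<And>x. f x \<ge> 0" and finite: "(\<integral>\<^sup>+ x. ennreal (f x) \<partial>count_space UNIV) < \<infinity>"
  shows "ennreal (\<Sum>\<^sub>\<infinity> x. f x) = (\<integral>\<^sup>+ x. ennreal (f x) \<partial>count_space UNIV)"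
proof -
  have "integrable (count_space UNIV) f"
    by (rule integrableI_nonneg) (use nonneg finite in auto)
  hence summable: "Infinite_Set_Sum.abs_summable_on f UNIV"
    by (simp add: abs_summable_on_def)
  hence "(\<Sum>\<^sub>\<infinity> x. f x) = infsetsum f UNIV"
    by (simp add: infsetsum_infsum)
  thus ?thesis
    using nn_integral_conv_infsetsum[OF summable] nonneg by simp
qed

lemma ennreal_heat_kernel: "s > 0 \<Longrightarrow> ennreal (heat_kernel s z) = heat_kernel_nn s z"
  unfolding heat_kernel_eq_infsum heat_kernel_nn_def
  using ennreal_infsum_nonneg[of "\<lambda>m. gaussian s (z + lattice_point m)"]
        heat_kernel_nn_finite[of s z] gaussian_nonneg[of s]
  unfolding heat_kernel_nn_def by auto

lemma heat_kernel_nonneg: "s > 0 \<Longrightarrow> heat_kernel s z \<ge> 0"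
  unfolding heat_kernel_eq_infsum by (simp add: gaussian_nonneg infsum_nonneg)

lemma heat_kernel_eq_enn2real: "s > 0 \<Longrightarrow> heat_kernel s z = enn2real (heat_kernel_nn s z)"
  by (metis ennreal_heat_kernel enn2real_ennreal heat_kernel_nonneg)

lemma heat_kernel_nn_measurable [measurable]: "heat_kernel_nn s \<in> borel_measurable borel"
proof -
  interpret c: sigma_finite_measure "count_space (UNIV::(int \<times> int) set)"
    by (rule sigma_finite_measure_count_space_countable) simp
  have "(\<lambda>p. ennreal (gaussian s (fst p + lattice_point (snd p))))
          \<in> borel_measurable (borel \<Otimes>\<^sub>M count_space UNIV)"
    by (rule measurable_compose_countable[where f="\<lambda>m p. ennreal (gaussian s (fst p + lattice_point m))"
          and g=snd]) auto
  thus ?thesis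
    unfolding heat_kernel_nn_def[abs_def] by (intro c.borel_measurable_nn_integral) (simp add: case_prod_beta')
qed

lemma heat_kernel_measurable:
  assumes "s > 0" shows "heat_kernel s \<in> borel_measurable borel"
proof -
  have "heat_kernel s = (\<lambda>z. enn2real (heat_kernel_nn s z))"
    using heat_kernel_eq_enn2real[OF assms] by auto
  thus ?thesis by simp
qed

lemma heat_kernel_nn_uminus: "heat_kernel_nn s (- z) = heat_kernel_nn s z"
proof -
  have "heat_kernel_nn s (- z) = (\<integral>\<^sup>+ m. ennreal (gaussian s (z + lattice_point (- m))) \<partial>count_space UNIV)"
    unfolding heat_kernel_nn_def
  proof (intro nn_integral_cong)
    fix m :: "int \<times> int"
    have "- z + lattice_point m = - (z + lattice_point (- m))" by (cases m) (simp add: lattice_point_def)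
    thus "ennreal (gaussian s (- z + lattice_point m)) = ennreal (gaussian s (z + lattice_point (- m)))"
      unfolding gaussian_def by (simp only: norm_minus_cancel)
  qed
  also have "\<dots> = heat_kernel_nn s z" unfolding heat_kernel_nn_def
    by (rule nn_integral_bij_count_space) (auto intro!: bij_betwI[where g=uminus])
  finally show ?thesis .
qed

lemma heat_kernel_uminus: "s > 0 \<Longrightarrow> heat_kernel s (- z) = heat_kernel s z"
  by (simp add: heat_kernel_eq_enn2real heat_kernel_nn_uminus)

lemma heat_kernel_bounded:
  assumes "s > 0"
  obtains C where "\<And>z. \<bar>fst z\<bar> \<le> A \<Longrightarrow> \<bar>snd z\<bar> \<le> A \<Longrightarrow> heat_kernel s z \<le> C"
proof -
  obtain B where "B < \<infinity>" "\<And>z. \<bar>fst z\<bar> \<le> A \<Longrightarrow> \<bar>snd z\<bar> \<le> A \<Longrightarrow> heat_kernel_nn s z \<le> B"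
    using heat_kernel_nn_bounded[OF assms] by blast
  thus ?thesis
    using that[of "enn2real B"] by (simp add: heat_kernel_eq_enn2real[OF assms] enn2real_mono)
qed

section \<open>The semigroup property\<close>

lemma nn_integral_lborel_translate:
  fixes c :: "'a::euclidean_space"
  assumes [measurable]: "f \<in> borel_measurable borel"
  shows "(\<integral>\<^sup>+x. f (x + c) \<partial>lborel) = (\<integral>\<^sup>+x. f x \<partial>lborel)"
proof -
  have "(\<integral>\<^sup>+x. f x \<partial>lborel) = (\<integral>\<^sup>+x. f x \<partial>distr lborel borel ((+) c))"
    by (simp add: lborel_distr_plus)
  also have "\<dots> = (\<integral>\<^sup>+x. f (c + x) \<partial>lborel)"
    by (subst nn_integral_distr) auto
  finally show ?thesis by (simp add: add.commute)
qed

lemma nn_integral_lborel_count_space_swap: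
  fixes F :: "'a::countable \<Rightarrow> 'b::euclidean_space \<Rightarrow> ennreal"
  assumes "\<And>m. F m \<in> borel_measurable borel"
  shows "(\<integral>\<^sup>+ z. \<integral>\<^sup>+ m. F m z \<partial>count_space UNIV \<partial>lborel) = (\<integral>\<^sup>+ m. \<integral>\<^sup>+ z. F m z \<partial>lborel \<partial>count_space UNIV)"
proof -
  interpret sigma_finite_measure "count_space (UNIV::'a set)"
    by (rule sigma_finite_measure_count_space_countable) simp
  interpret pair_sigma_finite "count_space (UNIV::'a set)" lborel ..
  have "(\<lambda>p. F (fst p) (snd p)) \<in> borel_measurable (count_space UNIV \<Otimes>\<^sub>M lborel)"
    by (rule measurable_compose_countable[where f="\<lambda>m p. F m (snd p)" and g=fst]) (use assms in auto)
  thus ?thesis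
    by (intro Fubini') (simp add: case_prod_beta')
qed

lemma gaussian_eq_normal_density:
  assumes s: "s > 0"
  shows "gaussian s z = normal_density 0 (sqrt (2 * s)) (fst z) * normal_density 0 (sqrt (2 * s)) (snd z)"
proof -
  obtain a b where z: "z = (a, b)" by (cases z)
  have "sqrt (2 * pi * (2 * s)) * sqrt (2 * pi * (2 * s)) = 4 * pi * s"
    using s by (simp add: real_sqrt_mult_self)
  moreover have "exp (- (a\<^sup>2 + b\<^sup>2) / (4 * s)) = exp (- a\<^sup>2 / (2 * (2 * s))) * exp (- b\<^sup>2 / (2 * (2 * s)))"
    by (simp add: exp_add[symmetric] add_divide_distrib diff_divide_distrib)
  ultimately show ?thesis
    unfolding gaussian_def normal_density_def z using s by (simp add: norm_Pair)
qed

lemma normal_density_convolution: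
  assumes s: "s > 0"
  shows "(\<integral>\<^sup>+t. ennreal (normal_density 0 (sqrt (2 * s)) (x - t) * normal_density 0 (sqrt (2 * s)) (t - y)) \<partial>lborel)
    = ennreal (normal_density 0 (sqrt (2 * (2 * s))) (x - y))"
proof -
  have "(\<integral>\<^sup>+t. ennreal (normal_density 0 (sqrt (2 * s)) (x - t) * normal_density 0 (sqrt (2 * s)) (t - y)) \<partial>lborel)
      = (\<integral>\<^sup>+t. ennreal (normal_density 0 (sqrt (2 * s)) ((x - y) - t) * normal_density 0 (sqrt (2 * s)) t) \<partial>lborel)"
    by (subst nn_integral_lborel_translate[symmetric, where c=y]) (auto simp: algebra_simps)
  also have "\<dots> = ennreal (normal_density 0 (sqrt ((sqrt (2 * s))\<^sup>2 + (sqrt (2 * s))\<^sup>2)) (x - y))"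
    using conv_normal_density_zero_mean[of "sqrt (2 * s)" "sqrt (2 * s)"] s by (auto dest: fun_cong)
  also have "(sqrt (2 * s))\<^sup>2 + (sqrt (2 * s))\<^sup>2 = 2 * (2 * s)" using s by simp
  finally show ?thesis .
qed

lemma gaussian_convolution:
  assumes s: "s > 0"
  shows "(\<integral>\<^sup>+t. ennreal (gaussian s (x - t) * gaussian s (t - y)) \<partial>lborel) = ennreal (gaussian (2 * s) (x - y))"
proof -
  let ?n = "normal_density 0 (sqrt (2 * s))"
  have "(\<integral>\<^sup>+t. ennreal (gaussian s (x - t) * gaussian s (t - y)) \<partial>lborel)
     = (\<integral>\<^sup>+t1. \<integral>\<^sup>+t2. ennreal (gaussian s (x - (t1, t2)) * gaussian s ((t1, t2) - y)) \<partial>lborel \<partial>lborel)"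
    by (subst lborel_prod[symmetric], subst lborel.nn_integral_fst[symmetric]) (auto simp: lborel_prod)
  also have "\<dots> = (\<integral>\<^sup>+t1. \<integral>\<^sup>+t2. ennreal (?n (fst x - t1) * ?n (t1 - fst y)) *
                       ennreal (?n (snd x - t2) * ?n (t2 - snd y)) \<partial>lborel \<partial>lborel)"
    using s by (intro nn_integral_cong) (simp add: gaussian_eq_normal_density ennreal_mult'[symmetric] mult_ac)
  also have "\<dots> = (\<integral>\<^sup>+t1. ennreal (?n (fst x - t1) * ?n (t1 - fst y)) \<partial>lborel) *
                   (\<integral>\<^sup>+t2. ennreal (?n (snd x - t2) * ?n (t2 - snd y)) \<partial>lborel)"
    by (simp add: nn_integral_cmult nn_integral_multc)
  also have "\<dots> = ennreal (gaussian (2 * s) (x - y))"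
    using s by (simp add: normal_density_convolution gaussian_eq_normal_density ennreal_mult'[symmetric])
  finally show ?thesis .
qed

definition half_open_cell :: "(real \<times> real) set" where
  "half_open_cell = {0..<2 * pi} \<times> {0..<2 * pi}"

lemma Omega_borel [measurable]: "Omega \<in> sets borel"
  unfolding Omega_def by simp

lemma half_open_cell_borel [measurable]: "half_open_cell \<in> sets borel"
  unfolding half_open_cell_def by (simp add: borel_prod[symmetric])

lemma nn_integral_lebesgue_on_Omega:
  "(\<integral>\<^sup>+ z. f z \<partial>lebesgue_on Omega) = (\<integral>\<^sup>+ z. f z * indicator Omega z \<partial>lborel)"
  by (subst nn_integral_restrict_space) (auto simp: nn_integral_completion)

lemma AE_indicator_Omega_eq_half_open_cell:
  "AE z in lborel. indicator Omega z = (indicator half_open_cell z :: ennreal)"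
proof (rule AE_I')
  have "{z::real \<times> real. fst z = 2 * pi \<or> snd z = 2 * pi} = {2 * pi} \<times> UNIV \<union> UNIV \<times> {2 * pi}"
    by auto
  also have "\<dots> \<in> null_sets (lborel \<Otimes>\<^sub>M lborel)"
    by (intro null_sets.Un lborel.times_in_null_sets1 lborel.times_in_null_sets2) auto
  finally show "{z::real \<times> real. fst z = 2 * pi \<or> snd z = 2 * pi} \<in> null_sets lborel"
    by (simp add: lborel_prod)
  show "{z \<in> space lborel. indicator Omega z \<noteq> (indicator half_open_cell z :: ennreal)}
        \<subseteq> {z. fst z = 2 * pi \<or> snd z = 2 * pi}"
    by (auto simp: indicator_def Omega_def half_open_cell_def less_eq_prod_def)
qed

lemma shift_mem_period_iff:
  "(0 \<le> a - 2 * pi * real_of_int n \<and> a - 2 * pi * real_of_int n < 2 * pi) \<longleftrightarrow> n = \<lfloor>a / (2 * pi)\<rfloor>"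
proof -
  have "(0 \<le> a - 2 * pi * real_of_int n \<and> a - 2 * pi * real_of_int n < 2 * pi)
      \<longleftrightarrow> (real_of_int n \<le> a / (2 * pi) \<and> a / (2 * pi) < real_of_int n + 1)"
    using pi_gt_zero by (simp add: field_simps)
  also have "\<dots> \<longleftrightarrow> n = \<lfloor>a / (2 * pi)\<rfloor>" by (metis floor_eq_iff)
  finally show ?thesis .
qed

lemma indicator_half_open_cell_shift:
  "(indicator half_open_cell (z - lattice_point m) :: ennreal)
     = indicator {(\<lfloor>fst z / (2 * pi)\<rfloor>, \<lfloor>snd z / (2 * pi)\<rfloor>)} m"
proof -
  have "z - lattice_point m \<in> half_open_cell \<longleftrightarrow> m = (\<lfloor>fst z / (2 * pi)\<rfloor>, \<lfloor>snd z / (2 * pi)\<rfloor>)"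
    using shift_mem_period_iff[of "fst z" "fst m"] shift_mem_period_iff[of "snd z" "snd m"]
    by (cases m; cases z) (auto simp: half_open_cell_def lattice_point_def)
  thus ?thesis by (simp add: indicator_def)
qed

lemma nn_integral_lattice_tiling:
  fixes P :: "real \<times> real \<Rightarrow> ennreal"
  assumes [measurable]: "P \<in> borel_measurable borel"
  shows "(\<integral>\<^sup>+ m. \<integral>\<^sup>+ z. P (z + lattice_point m) \<partial>lebesgue_on Omega \<partial>count_space UNIV) = (\<integral>\<^sup>+ z. P z \<partial>lborel)"
proof -
  have "(\<integral>\<^sup>+ m. \<integral>\<^sup>+ z. P (z + lattice_point m) \<partial>lebesgue_on Omega \<partial>count_space UNIV)
      = (\<integral>\<^sup>+ m. \<integral>\<^sup>+ z. P (z + lattice_point m) * indicator half_open_cell z \<partial>lborel \<partial>count_space UNIV)"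
    unfolding nn_integral_lebesgue_on_Omega
    by (intro nn_integral_cong nn_integral_cong_AE)
       (use AE_indicator_Omega_eq_half_open_cell in \<open>auto\<close>)
  also have "\<dots> = (\<integral>\<^sup>+ m. \<integral>\<^sup>+ z. P z * indicator half_open_cell (z - lattice_point m) \<partial>lborel \<partial>count_space UNIV)"
  proof (rule nn_integral_cong)
    fix m :: "int \<times> int"
    show "(\<integral>\<^sup>+ z. P (z + lattice_point m) * indicator half_open_cell z \<partial>lborel)
        = (\<integral>\<^sup>+ z. P z * indicator half_open_cell (z - lattice_point m) \<partial>lborel)"
      using nn_integral_lborel_translate[of "\<lambda>z. P z * indicator half_open_cell (z - lattice_point m)"
          "lattice_point m"] by simp
  qed
  also have "\<dots> = (\<integral>\<^sup>+ z. \<integral>\<^sup>+ m. P z * indicator half_open_cell (z - lattice_point m) \<partial>count_space UNIV \<partial>lborel)"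
    by (rule nn_integral_lborel_count_space_swap[symmetric]) simp
  also have "\<dots> = (\<integral>\<^sup>+ z. P z \<partial>lborel)"
    by (simp add: indicator_half_open_cell_shift)
  finally show ?thesis .
qed

lemma heat_kernel_nn_mult:
  "heat_kernel_nn s u * heat_kernel_nn s v
     = (\<integral>\<^sup>+ p. ennreal (gaussian s (u + lattice_point (fst p))) * ennreal (gaussian s (v + lattice_point (snd p)))
          \<partial>count_space UNIV)"
proof -
  interpret c: sigma_finite_measure "count_space (UNIV::(int \<times> int) set)"
    by (rule sigma_finite_measure_count_space_countable) simp
  show ?thesis
    unfolding heat_kernel_nn_def count_space_prod_countable[where 'a="int \<times> int" and 'b="int \<times> int"]
    by (subst c.nn_integral_fst[symmetric])
       (auto simp: nn_integral_cmult simp flip: nn_integral_multc)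
qed

lemma heat_kernel_nn_semigroup:
  assumes s: "s > 0"
  shows "(\<integral>\<^sup>+ z. heat_kernel_nn s (x - z) * heat_kernel_nn s (z - y) \<partial>lebesgue_on Omega)
           = heat_kernel_nn (2 * s) (x - y)"
proof -
  interpret c: sigma_finite_measure "count_space (UNIV::(int \<times> int) set)"
    by (rule sigma_finite_measure_count_space_countable) simp
  define F where "F z p = ennreal (gaussian s (x - z + lattice_point (fst p))) *
      ennreal (gaussian s (z - y + lattice_point (snd p))) * indicator Omega z"
    for z :: "real \<times> real" and p :: "(int \<times> int) \<times> (int \<times> int)"
  define P where "P c t = ennreal (gaussian s (x + lattice_point c - t) * gaussian s (t - y))" for c t
  have [measurable]: "P c \<in> borel_measurable borel" for c unfolding P_def by measurable
  have "(\<integral>\<^sup>+ z. heat_kernel_nn s (x - z) * heat_kernel_nn s (z - y) \<partial>lebesgue_on Omega)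
      = (\<integral>\<^sup>+ z. \<integral>\<^sup>+ p. F z p \<partial>count_space UNIV \<partial>lborel)"
    unfolding nn_integral_lebesgue_on_Omega heat_kernel_nn_mult F_def by (simp add: nn_integral_multc)
  also have "\<dots> = (\<integral>\<^sup>+ p. \<integral>\<^sup>+ z. F z p \<partial>lborel \<partial>count_space UNIV)"
    by (rule nn_integral_lborel_count_space_swap) (simp add: F_def)
  \<comment> \<open>Reindex the pair of lattice points \<open>(a, b)\<close> by \<open>(a + b, b)\<close>: \<open>b\<close> then locates \<open>z\<close> in a
      translated cell and \<open>a + b\<close> is the single lattice shift left in the Gaussian convolution.\<close>
  also have "\<dots> = (\<integral>\<^sup>+ p. (\<lambda>q. \<integral>\<^sup>+ z. P (fst q) (z + lattice_point (snd q)) \<partial>lebesgue_on Omega)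
                          ((\<lambda>(a, b). (a + b, b)) p) \<partial>count_space UNIV)"
  proof (rule nn_integral_cong)
    fix p :: "(int \<times> int) \<times> (int \<times> int)"
    obtain a b where p: "p = (a, b)" by (cases p)
    show "(\<integral>\<^sup>+ z. F z p \<partial>lborel) = (\<lambda>q. \<integral>\<^sup>+ z. P (fst q) (z + lattice_point (snd q)) \<partial>lebesgue_on Omega)
                                     ((\<lambda>(a, b). (a + b, b)) p)"
      unfolding nn_integral_lebesgue_on_Omega p F_def P_def
      by (intro nn_integral_cong)
         (simp add: lattice_point_add ennreal_mult' gaussian_nonneg[OF s] algebra_simps)
  qed
  also have "\<dots> = (\<integral>\<^sup>+ q. \<integral>\<^sup>+ z. P (fst q) (z + lattice_point (snd q)) \<partial>lebesgue_on Omega \<partial>count_space UNIV)"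
    by (rule nn_integral_bij_count_space) (auto intro!: bij_betwI[where g="\<lambda>(c, b). (c - b, b)"])
  also have "\<dots> = (\<integral>\<^sup>+ c. \<integral>\<^sup>+ b. \<integral>\<^sup>+ z. P c (z + lattice_point b) \<partial>lebesgue_on Omega
                      \<partial>count_space UNIV \<partial>count_space UNIV)"
    unfolding count_space_prod_countable[where 'a="int \<times> int" and 'b="int \<times> int"]
    by (subst c.nn_integral_fst[symmetric]) auto
  also have "\<dots> = (\<integral>\<^sup>+ c. \<integral>\<^sup>+ t. P c t \<partial>lborel \<partial>count_space UNIV)"
    by (simp add: nn_integral_lattice_tiling)
  also have "\<dots> = (\<integral>\<^sup>+ c. ennreal (gaussian (2 * s) (x - y + lattice_point c)) \<partial>count_space UNIV)"
    unfolding P_def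
    using gaussian_convolution[OF s, of "x + lattice_point _" y] by (simp add: algebra_simps)
  also have "\<dots> = heat_kernel_nn (2 * s) (x - y)" by (simp add: heat_kernel_nn_def)
  finally show ?thesis .
qed

section \<open>Bounded kernels on a finite measure space\<close>

definition bounded_measurable :: "'a measure \<Rightarrow> ('a \<Rightarrow> real) \<Rightarrow> bool" where
  "bounded_measurable M f \<longleftrightarrow> f \<in> borel_measurable M \<and> (\<exists>C. \<forall>x\<in>space M. \<bar>f x\<bar> \<le> C)"

definition bounded_kernel :: "'a measure \<Rightarrow> ('a \<Rightarrow> 'a \<Rightarrow> real) \<Rightarrow> bool" where
  "bounded_kernel M k \<longleftrightarrow>
     case_prod k \<in> borel_measurable (M \<Otimes>\<^sub>M M) \<and> (\<exists>C. \<forall>x\<in>space M. \<forall>y\<in>space M. \<bar>k x y\<bar> \<le> C)"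

lemma bounded_measurable_const: "bounded_measurable M (\<lambda>x. c)"
  unfolding bounded_measurable_def by auto

lemma bounded_measurable_mult:
  assumes "bounded_measurable M f" "bounded_measurable M g"
  shows "bounded_measurable M (\<lambda>x. f x * g x)"
proof -
  obtain C D where "\<forall>x\<in>space M. \<bar>f x\<bar> \<le> C" "\<forall>x\<in>space M. \<bar>g x\<bar> \<le> D"
    using assms unfolding bounded_measurable_def by blast
  hence "\<forall>x\<in>space M. \<bar>f x * g x\<bar> \<le> C * D"
    by (auto simp: abs_mult intro!: mult_mono)
  thus ?thesis using assms unfolding bounded_measurable_def by auto
qed

lemma bounded_measurable_add:
  assumes "bounded_measurable M f" "bounded_measurable M g"
  shows "bounded_measurable M (\<lambda>x. f x + g x)"
proof -
  obtain C D where "\<forall>x\<in>space M. \<bar>f x\<bar> \<le> C" "\<forall>x\<in>space M. \<bar>g x\<bar> \<le> D"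
    using assms unfolding bounded_measurable_def by blast
  hence "\<forall>x\<in>space M. \<bar>f x + g x\<bar> \<le> C + D"
    by (auto intro!: order.trans[OF abs_triangle_ineq] add_mono)
  thus ?thesis using assms unfolding bounded_measurable_def by auto
qed

lemma bounded_measurable_diff:
  "bounded_measurable M f \<Longrightarrow> bounded_measurable M g \<Longrightarrow> bounded_measurable M (\<lambda>x. f x - g x)"
  using bounded_measurable_add[of M f "\<lambda>x. (-1) * g x"]
    bounded_measurable_mult[OF bounded_measurable_const, of M g "-1"]
  by simp

lemma bounded_measurable_cong:
  "bounded_measurable M f \<Longrightarrow> (\<And>x. x \<in> space M \<Longrightarrow> f x = g x) \<Longrightarrow> bounded_measurable M g"
  unfolding bounded_measurable_def by (metis measurable_cong)

lemma bounded_kernel_section: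
  "bounded_kernel M k \<Longrightarrow> x \<in> space M \<Longrightarrow> bounded_measurable M (\<lambda>y. k x y)"
  unfolding bounded_kernel_def bounded_measurable_def
  using measurable_Pair2[of "case_prod k" M M borel x] by auto

lemma bounded_kernel_swap: "bounded_kernel M k \<Longrightarrow> bounded_kernel M (\<lambda>y x. k x y)"
  unfolding bounded_kernel_def
  using measurable_pair_swap_iff[of "case_prod k" M M borel] by (auto simp: case_prod_beta')

context finite_measure
begin

lemma integrable_bounded_measurable: "bounded_measurable M f \<Longrightarrow> integrable M f"
  unfolding bounded_measurable_def by (auto intro!: integrable_const_bound AE_I2)

lemma integrable_bounded_measurable_mult:
  assumes F: "integrable M F" and u: "bounded_measurable M u"
  shows "integrable M (\<lambda>x. u x * F x)"
proof -
  obtain C where C: "\<forall>x\<in>space M. \<bar>u x\<bar> \<le> C" and [measurable]: "u \<in> borel_measurable M"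
    using u unfolding bounded_measurable_def by blast
  have [measurable]: "F \<in> borel_measurable M" using F by auto
  show ?thesis
  proof (rule Bochner_Integration.integrable_bound[OF integrable_mult_right[OF F, of "\<bar>C\<bar>"]])
    show "AE x in M. norm (u x * F x) \<le> norm (\<bar>C\<bar> * F x)"
      using C by (intro AE_I2) (force simp: abs_mult intro: mult_right_mono)
  qed measurable
qed

lemma integrable_bounded_kernel_form:
  assumes k: "bounded_kernel M k" and a: "bounded_measurable M a" and b: "bounded_measurable M b"
  shows "integrable (M \<Otimes>\<^sub>M M) (\<lambda>(x, y). a x * k x y * b y)"
proof -
  interpret MM: finite_measure "M \<Otimes>\<^sub>M M"
    by (intro finite_measure_pair_measure finite_measure_axioms)
  obtain C where C: "\<forall>x\<in>space M. \<forall>y\<in>space M. \<bar>k x y\<bar> \<le> C"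
    and [measurable]: "case_prod k \<in> borel_measurable (M \<Otimes>\<^sub>M M)"
    using k unfolding bounded_kernel_def by blast
  obtain A B where A: "\<forall>x\<in>space M. \<bar>a x\<bar> \<le> A" and B: "\<forall>x\<in>space M. \<bar>b x\<bar> \<le> B"
    and [measurable]: "a \<in> borel_measurable M" "b \<in> borel_measurable M"
    using a b unfolding bounded_measurable_def by blast
  show ?thesis
  proof (rule MM.integrable_const_bound[where B="A * C * B"])
    show "AE p in M \<Otimes>\<^sub>M M. norm ((\<lambda>(x, y). a x * k x y * b y) p) \<le> A * C * B"
    proof (rule AE_I2)
      fix p assume "p \<in> space (M \<Otimes>\<^sub>M M)"
      then obtain x y where p: "p = (x, y)" "x \<in> space M" "y \<in> space M" by (auto simp: space_pair_measure)
      have "0 \<le> A" "0 \<le> C" "0 \<le> B" using p A C B by (meson abs_ge_zero order_trans)+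
      thus "norm ((\<lambda>(x, y). a x * k x y * b y) p) \<le> A * C * B"
        using p A C B by (auto simp: abs_mult intro!: mult_mono)
    qed
    have "(\<lambda>p. a (fst p) * case_prod k p * b (snd p)) \<in> borel_measurable (M \<Otimes>\<^sub>M M)" by measurable
    thus "(\<lambda>(x, y). a x * k x y * b y) \<in> borel_measurable (M \<Otimes>\<^sub>M M)"
      by (simp add: case_prod_beta')
  qed
qed

lemma bounded_measurable_kernel_integral:
  assumes k: "bounded_kernel M k" and b: "bounded_measurable M b"
  shows "bounded_measurable M (\<lambda>x. \<integral>y. k x y * b y \<partial>M)"
proof -
  obtain C where C: "\<forall>x\<in>space M. \<forall>y\<in>space M. \<bar>k x y\<bar> \<le> C"
    and [measurable]: "case_prod k \<in> borel_measurable (M \<Otimes>\<^sub>M M)"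
    using k unfolding bounded_kernel_def by blast
  obtain B where B: "\<forall>x\<in>space M. \<bar>b x\<bar> \<le> B" and [measurable]: "b \<in> borel_measurable M"
    using b unfolding bounded_measurable_def by blast
  have "(\<lambda>x. \<integral>y. k x y * b y \<partial>M) \<in> borel_measurable M"
  proof (rule borel_measurable_lebesgue_integral)
    have "(\<lambda>p. case_prod k p * b (snd p)) \<in> borel_measurable (M \<Otimes>\<^sub>M M)" by measurable
    thus "(\<lambda>(x, y). k x y * b y) \<in> borel_measurable (M \<Otimes>\<^sub>M M)" by (simp add: case_prod_beta')
  qed
  moreover have "\<bar>\<integral>y. k x y * b y \<partial>M\<bar> \<le> measure M (space M) * (C * B)" if x: "x \<in> space M" for x
  proof -
    have "\<bar>\<integral>y. k x y * b y \<partial>M\<bar> \<le> (\<integral>y. \<bar>k x y * b y\<bar> \<partial>M)"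
      by (rule integral_abs_bound)
    also have "\<dots> \<le> (\<integral>y. C * B \<partial>M)"
    proof (rule integral_mono)
      show "integrable M (\<lambda>y. \<bar>k x y * b y\<bar>)"
        using integrable_bounded_measurable[OF bounded_measurable_mult[OF bounded_kernel_section[OF k x] b]]
        by simp
      fix y assume y: "y \<in> space M"
      have "0 \<le> C" "0 \<le> B" using x y C B by (meson abs_ge_zero order_trans)+
      thus "\<bar>k x y * b y\<bar> \<le> C * B" using x y C B by (auto simp: abs_mult intro!: mult_mono)
    qed simp
    also have "\<dots> = measure M (space M) * (C * B)" by simp
    finally show ?thesis .
  qed
  ultimately show ?thesis unfolding bounded_measurable_def by blast
qed

lemma integral_kernel_form_swap:
  assumes k: "bounded_kernel M k" and a: "bounded_measurable M a" and b: "bounded_measurable M b"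
  shows "(\<integral>x. a x * (\<integral>y. k x y * b y \<partial>M) \<partial>M) = (\<integral>y. b y * (\<integral>x. a x * k x y \<partial>M) \<partial>M)"
proof -
  interpret MM: pair_sigma_finite M M ..
  have "(\<integral>x. a x * (\<integral>y. k x y * b y \<partial>M) \<partial>M) = (\<integral>x. (\<integral>y. a x * k x y * b y \<partial>M) \<partial>M)"
    by (simp add: mult.assoc)
  also have "\<dots> = (\<integral>y. (\<integral>x. a x * k x y * b y \<partial>M) \<partial>M)"
    using MM.Fubini_integral[of "\<lambda>x y. a x * k x y * b y"] integrable_bounded_kernel_form[OF k a b]
    by simp
  also have "\<dots> = (\<integral>y. b y * (\<integral>x. a x * k x y \<partial>M) \<partial>M)"
    by (simp add: mult.commute mult.left_commute flip: integral_mult_right_zero)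
  finally show ?thesis .
qed

lemma bounded_measurable_threshold:
  fixes \<phi> :: "'a \<Rightarrow> real"
  assumes [measurable]: "\<phi> \<in> borel_measurable M"
    and v: "\<And>x. x \<in> space M \<Longrightarrow> v x = (if \<phi> x \<le> 0 then 1 else 0)"
  shows "bounded_measurable M v"
proof (rule bounded_measurable_cong)
  have "(\<lambda>x. indicator {..0::real} (\<phi> x) :: real) \<in> borel_measurable M"
    by (intro measurable_compose[OF assms(1)] borel_measurable_indicator) simp
  moreover have "(\<lambda>x. indicator {..0::real} (\<phi> x) :: real) = (\<lambda>x. if \<phi> x \<le> 0 then 1 else 0)"
    by (simp add: indicator_def fun_eq_iff)
  ultimately have "(\<lambda>x. if \<phi> x \<le> 0 then 1 else 0 :: real) \<in> borel_measurable M" by simp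
  thus "bounded_measurable M (\<lambda>x. if \<phi> x \<le> 0 then 1 else 0)"
    unfolding bounded_measurable_def by (intro conjI exI[of _ 1]) auto
qed (simp add: v)

lemma integral_threshold_le:
  fixes \<phi> :: "'a \<Rightarrow> real"
  assumes \<phi>: "integrable M \<phi>"
    and v: "\<And>x. x \<in> space M \<Longrightarrow> v x = (if \<phi> x \<le> 0 then 1 else 0)"
    and w: "bounded_measurable M w" "\<And>x. x \<in> space M \<Longrightarrow> w x \<in> {0, 1}"
  shows "(\<integral>x. v x * \<phi> x \<partial>M) \<le> (\<integral>x. w x * \<phi> x \<partial>M)"
proof (rule integral_mono)
  show "integrable M (\<lambda>x. v x * \<phi> x)"
    using \<phi> v by (intro integrable_bounded_measurable_mult bounded_measurable_threshold) auto
  show "integrable M (\<lambda>x. w x * \<phi> x)"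
    using \<phi> w by (intro integrable_bounded_measurable_mult)
  show "v x * \<phi> x \<le> w x * \<phi> x" if "x \<in> space M" for x
    using v[OF that] w(2)[OF that] by auto
qed

end

section \<open>The heat kernel quadratic form on the torus\<close>

interpretation Omega: finite_measure "lebesgue_on Omega"
  by (rule finite_measure_lebesgue_on) (simp add: Omega_def)

lemma mem_Omega_iff: "z \<in> Omega \<longleftrightarrow> 0 \<le> fst z \<and> fst z \<le> 2 * pi \<and> 0 \<le> snd z \<and> snd z \<le> 2 * pi"
  unfolding Omega_def by (cases z) (simp add: cbox_Pair_eq)

lemma bounded_kernel_heat_kernel:
  assumes s: "s > 0"
  shows "bounded_kernel (lebesgue_on Omega) (\<lambda>x y. heat_kernel s (x - y))"
  unfolding bounded_kernel_def
proof (intro conjI)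
  have "(\<lambda>p. id (fst p) - id (snd p)) \<in> borel_measurable (lebesgue_on Omega \<Otimes>\<^sub>M lebesgue_on Omega)"
    by (intro borel_measurable_diff measurable_compose[OF measurable_fst id_borel_measurable_lebesgue_on]
          measurable_compose[OF measurable_snd id_borel_measurable_lebesgue_on])
  from measurable_compose[OF this heat_kernel_measurable[OF s]]
  show "(\<lambda>(x, y). heat_kernel s (x - y)) \<in> borel_measurable (lebesgue_on Omega \<Otimes>\<^sub>M lebesgue_on Omega)"
    by (simp add: case_prod_beta')
next
  obtain C where C: "\<And>z. \<bar>fst z\<bar> \<le> 2 * pi \<Longrightarrow> \<bar>snd z\<bar> \<le> 2 * pi \<Longrightarrow> heat_kernel s z \<le> C"
    using heat_kernel_bounded[OF s] by blast
  have "\<bar>heat_kernel s (x - y)\<bar> \<le> C" if "x \<in> Omega" "y \<in> Omega" for x y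
    using C[of "x - y"] that heat_kernel_nonneg[OF s, of "x - y"]
    unfolding mem_Omega_iff by (auto simp: abs_le_iff)
  thus "\<exists>C. \<forall>x\<in>space (lebesgue_on Omega). \<forall>y\<in>space (lebesgue_on Omega). \<bar>heat_kernel s (x - y)\<bar> \<le> C"
    by (simp only: space_lebesgue_on) blast
qed

lemma heat_kernel_semigroup:
  assumes s: "s > 0" and x: "x \<in> Omega" and y: "y \<in> Omega"
  shows "heat_kernel (2 * s) (x - y)
           = (\<integral>z. heat_kernel s (x - z) * heat_kernel s (z - y) \<partial>lebesgue_on Omega)"
proof -
  have "bounded_measurable (lebesgue_on Omega) (\<lambda>z. heat_kernel s (x - z) * heat_kernel s (z - y))"
    using bounded_kernel_heat_kernel[OF s] x y
    by (intro bounded_measurable_mult bounded_kernel_section bounded_kernel_swap[THEN bounded_kernel_section])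
       simp_all
  hence "ennreal (\<integral>z. heat_kernel s (x - z) * heat_kernel s (z - y) \<partial>lebesgue_on Omega)
      = (\<integral>\<^sup>+z. ennreal (heat_kernel s (x - z) * heat_kernel s (z - y)) \<partial>lebesgue_on Omega)"
    by (intro nn_integral_eq_integral[symmetric])
       (auto intro: Omega.integrable_bounded_measurable simp: heat_kernel_nonneg[OF s])
  also have "\<dots> = (\<integral>\<^sup>+z. heat_kernel_nn s (x - z) * heat_kernel_nn s (z - y) \<partial>lebesgue_on Omega)"
    using s by (simp add: ennreal_heat_kernel[symmetric] ennreal_mult' heat_kernel_nonneg)
  also have "\<dots> = ennreal (heat_kernel (2 * s) (x - y))"
    using s by (simp add: heat_kernel_nn_semigroup ennreal_heat_kernel)
  finally show ?thesis
    using s by (simp add: heat_kernel_nonneg integral_nonneg_AE)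
qed

definition heat_form :: "real \<Rightarrow> (real \<times> real \<Rightarrow> real) \<Rightarrow> (real \<times> real \<Rightarrow> real) \<Rightarrow> real" where
  "heat_form t a b = (\<integral>x. a x * tconv (heat_kernel t) b x \<partial>lebesgue_on Omega)"

lemma bounded_measurable_tconv:
  "t > 0 \<Longrightarrow> bounded_measurable (lebesgue_on Omega) b
    \<Longrightarrow> bounded_measurable (lebesgue_on Omega) (tconv (heat_kernel t) b)"
  unfolding tconv_def[abs_def]
  using Omega.bounded_measurable_kernel_integral[OF bounded_kernel_heat_kernel] by blast

lemma integrable_heat_form:
  "t > 0 \<Longrightarrow> bounded_measurable (lebesgue_on Omega) a \<Longrightarrow> bounded_measurable (lebesgue_on Omega) b
    \<Longrightarrow> integrable (lebesgue_on Omega) (\<lambda>x. a x * tconv (heat_kernel t) b x)"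
  by (intro Omega.integrable_bounded_measurable bounded_measurable_mult bounded_measurable_tconv)

lemma tconv_heat_kernel_linear:
  assumes t: "t > 0" and b1: "bounded_measurable (lebesgue_on Omega) b1"
    and b2: "bounded_measurable (lebesgue_on Omega) b2" and x: "x \<in> Omega"
  shows "tconv (heat_kernel t) (\<lambda>y. \<alpha> * b1 y + \<beta> * b2 y) x
           = \<alpha> * tconv (heat_kernel t) b1 x + \<beta> * tconv (heat_kernel t) b2 x"
proof -
  have "integrable (lebesgue_on Omega) (\<lambda>y. heat_kernel t (x - y) * b y)"
    if "bounded_measurable (lebesgue_on Omega) b" for b
    using x by (intro Omega.integrable_bounded_measurable
        bounded_measurable_mult[OF bounded_kernel_section[OF bounded_kernel_heat_kernel[OF t]] that]) simp
  thus ?thesis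
    using b1 b2 unfolding tconv_def by (simp add: algebra_simps)
qed

lemma heat_form_linear_right:
  assumes t: "t > 0" and a: "bounded_measurable (lebesgue_on Omega) a"
    and b1: "bounded_measurable (lebesgue_on Omega) b1" and b2: "bounded_measurable (lebesgue_on Omega) b2"
  shows "heat_form t a (\<lambda>y. \<alpha> * b1 y + \<beta> * b2 y) = \<alpha> * heat_form t a b1 + \<beta> * heat_form t a b2"
proof -
  have "heat_form t a (\<lambda>y. \<alpha> * b1 y + \<beta> * b2 y) =
     (\<integral>x. \<alpha> * (a x * tconv (heat_kernel t) b1 x) + \<beta> * (a x * tconv (heat_kernel t) b2 x) \<partial>lebesgue_on Omega)"
    unfolding heat_form_def
    by (intro Bochner_Integration.integral_cong) (simp_all add: tconv_heat_kernel_linear[OF t b1 b2] algebra_simps)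
  thus ?thesis
    unfolding heat_form_def using integrable_heat_form[OF t a b1] integrable_heat_form[OF t a b2] by simp
qed

lemma heat_form_one_minus:
  assumes "t > 0" "bounded_measurable (lebesgue_on Omega) a" "bounded_measurable (lebesgue_on Omega) b"
  shows "heat_form t a (\<lambda>y. 1 - c * b y) = heat_form t a (\<lambda>_. 1) - c * heat_form t a b"
  using heat_form_linear_right[OF assms(1,2) bounded_measurable_const[of _ 1] assms(3), where \<alpha>=1 and \<beta>="- c"]
  by simp

lemma heat_form_diff_right:
  assumes "t > 0" "bounded_measurable (lebesgue_on Omega) a"
    "bounded_measurable (lebesgue_on Omega) b1" "bounded_measurable (lebesgue_on Omega) b2"
  shows "heat_form t a (\<lambda>y. b1 y - b2 y) = heat_form t a b1 - heat_form t a b2"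
  using heat_form_linear_right[OF assms, where \<alpha>=1 and \<beta>="-1"] by simp

lemma heat_form_diff_left:
  assumes t: "t > 0" and a1: "bounded_measurable (lebesgue_on Omega) a1"
    and a2: "bounded_measurable (lebesgue_on Omega) a2" and b: "bounded_measurable (lebesgue_on Omega) b"
  shows "heat_form t (\<lambda>y. a1 y - a2 y) b = heat_form t a1 b - heat_form t a2 b"
  unfolding heat_form_def using integrable_heat_form[OF t a1 b] integrable_heat_form[OF t a2 b]
  by (simp add: algebra_simps)

lemma heat_form_commute:
  assumes t: "t > 0" and a: "bounded_measurable (lebesgue_on Omega) a" and b: "bounded_measurable (lebesgue_on Omega) b"
  shows "heat_form t a b = heat_form t b a"
proof -
  have "heat_form t a b = (\<integral>y. b y * (\<integral>x. a x * heat_kernel t (x - y) \<partial>lebesgue_on Omega) \<partial>lebesgue_on Omega)"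
    unfolding heat_form_def tconv_def
    by (rule Omega.integral_kernel_form_swap[OF bounded_kernel_heat_kernel[OF t] a b])
  also have "\<dots> = heat_form t b a"
    unfolding heat_form_def tconv_def
    by (intro Bochner_Integration.integral_cong refl arg_cong[where f="\<lambda>z. _ * z"])
       (metis heat_kernel_uminus[OF t] minus_diff_eq mult.commute)
  finally show ?thesis .
qed

lemma heat_form_nonneg:
  assumes t: "t > 0" and w: "bounded_measurable (lebesgue_on Omega) w"
  shows "heat_form t w w \<ge> 0"
proof -
  define s where "s = t / 2"
  have s: "s > 0" and t_eq: "t = 2 * s" using t by (auto simp: s_def)
  define H where "H = heat_kernel s"
  have H: "bounded_kernel (lebesgue_on Omega) (\<lambda>x y. H (x - y))"
    unfolding H_def by (rule bounded_kernel_heat_kernel[OF s])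
  define h where "h z = (\<integral>y. H (z - y) * w y \<partial>lebesgue_on Omega)" for z
  have h: "bounded_measurable (lebesgue_on Omega) h"
    unfolding h_def by (rule Omega.bounded_measurable_kernel_integral[OF H w])
  have "tconv (heat_kernel t) w x = (\<integral>z. H (x - z) * h z \<partial>lebesgue_on Omega)" if x: "x \<in> Omega" for x
  proof -
    have "tconv (heat_kernel t) w x
        = (\<integral>y. w y * (\<integral>z. H (x - z) * H (z - y) \<partial>lebesgue_on Omega) \<partial>lebesgue_on Omega)"
      unfolding tconv_def t_eq H_def
      by (intro Bochner_Integration.integral_cong refl) (simp add: heat_kernel_semigroup[OF s x])
    also have "\<dots> = (\<integral>z. H (x - z) * h z \<partial>lebesgue_on Omega)"
      unfolding h_def
      by (rule Omega.integral_kernel_form_swap[OF H bounded_kernel_section[OF H] w, symmetric]) (simp add: x)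
    finally show ?thesis .
  qed
  hence "heat_form t w w = (\<integral>x. w x * (\<integral>z. H (x - z) * h z \<partial>lebesgue_on Omega) \<partial>lebesgue_on Omega)"
    unfolding heat_form_def by (intro Bochner_Integration.integral_cong) simp_all
  also have "\<dots> = (\<integral>z. h z * (\<integral>x. w x * H (x - z) \<partial>lebesgue_on Omega) \<partial>lebesgue_on Omega)"
    by (rule Omega.integral_kernel_form_swap[OF H w h])
  also have "\<dots> = (\<integral>z. h z * h z \<partial>lebesgue_on Omega)"
    unfolding h_def H_def
    by (intro Bochner_Integration.integral_cong refl arg_cong[where f="\<lambda>z. _ * z"])
       (metis heat_kernel_uminus[OF s] minus_diff_eq mult.commute)
  finally show ?thesis by (simp add: integral_nonneg_AE)
qed

lemma heat_form_perimeter_le_linearization: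
  assumes t: "t > 0" and v: "bounded_measurable (lebesgue_on Omega) v" and w: "bounded_measurable (lebesgue_on Omega) w"
  shows "heat_form t v (\<lambda>y. 1 - v y) - heat_form t w (\<lambda>y. 1 - w y)
           \<le> heat_form t v (\<lambda>y. 1 - 2 * w y) - heat_form t w (\<lambda>y. 1 - 2 * w y)"
proof -
  have d: "bounded_measurable (lebesgue_on Omega) (\<lambda>y. v y - w y)" by (rule bounded_measurable_diff[OF v w])
  have "0 \<le> heat_form t (\<lambda>y. v y - w y) (\<lambda>y. v y - w y)" by (rule heat_form_nonneg[OF t d])
  also have "\<dots> = (heat_form t v v - heat_form t v w) - (heat_form t w v - heat_form t w w)"
    by (simp add: heat_form_diff_left[OF t v w d] heat_form_diff_right[OF t v v w] heat_form_diff_right[OF t w v w])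
  finally show ?thesis
    using heat_form_commute[OF t w v] heat_form_one_minus[OF t v v, of 1] heat_form_one_minus[OF t w w, of 1]
      heat_form_one_minus[OF t v w, of 2] heat_form_one_minus[OF t w w, of 2]
    by simp
qed

section \<open>Energy decrease along the iteration\<close>

lemma energy_eq_heat_form:
  "energy \<tau> lam F1 F2 f u \<theta> = fidelity F1 F2 f u \<theta> + lam * sqrt (pi / \<tau>) * heat_form \<tau> u (\<lambda>y. 1 - u y)"
  unfolding energy_def heat_form_def by simp

lemma integrable_ictm_phi:
  assumes "\<tau> > 0" "bounded_measurable (lebesgue_on Omega) w"
    and "integrable (lebesgue_on Omega) (F1 f \<theta>)" "integrable (lebesgue_on Omega) (F2 f \<theta>)"
  shows "integrable (lebesgue_on Omega) (ictm_phi \<tau> lam F1 F2 f w \<theta>)"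
proof -
  have "bounded_measurable (lebesgue_on Omega) (tconv (heat_kernel \<tau>) (\<lambda>y. 1 - 2 * w y))"
    using assms by (intro bounded_measurable_tconv bounded_measurable_diff bounded_measurable_mult
        bounded_measurable_const)
  thus ?thesis
    unfolding ictm_phi_def[abs_def] using assms(3,4)
    by (auto intro!: Bochner_Integration.integrable_add Bochner_Integration.integrable_diff integrable_mult_right
        Omega.integrable_bounded_measurable[OF \<open>bounded_measurable _ (tconv _ _)\<close>])
qed

lemma integral_mult_ictm_phi:
  assumes t: "\<tau> > 0" and a: "bounded_measurable (lebesgue_on Omega) a"
    and w: "bounded_measurable (lebesgue_on Omega) w"
    and F1: "integrable (lebesgue_on Omega) (F1 f \<theta>)" and F2: "integrable (lebesgue_on Omega) (F2 f \<theta>)"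
  shows "(\<integral>x. a x * ictm_phi \<tau> lam F1 F2 f w \<theta> x \<partial>lebesgue_on Omega)
           = fidelity F1 F2 f a \<theta> - (\<integral>x. F2 f \<theta> x \<partial>lebesgue_on Omega)
             + lam * sqrt (pi / \<tau>) * heat_form \<tau> a (\<lambda>y. 1 - 2 * w y)"
proof -
  have w': "bounded_measurable (lebesgue_on Omega) (\<lambda>y. 1 - 2 * w y)"
    using w by (intro bounded_measurable_diff bounded_measurable_mult bounded_measurable_const)
  have "integrable (lebesgue_on Omega) (\<lambda>x. a x * F1 f \<theta> x + (1 - a x) * F2 f \<theta> x)"
    using a by (intro Bochner_Integration.integrable_add Omega.integrable_bounded_measurable_mult
        bounded_measurable_diff bounded_measurable_const F1 F2)
  moreover have "(\<lambda>x. a x * ictm_phi \<tau> lam F1 F2 f w \<theta> x) = (\<lambda>x. (a x * F1 f \<theta> x + (1 - a x) * F2 f \<theta> x)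
      - F2 f \<theta> x + lam * sqrt (pi / \<tau>) * (a x * tconv (heat_kernel \<tau>) (\<lambda>y. 1 - 2 * w y) x))"
    unfolding ictm_phi_def by (simp add: algebra_simps fun_eq_iff)
  ultimately show ?thesis
    unfolding fidelity_def heat_form_def using F2 integrable_heat_form[OF t a w'] by simp
qed

lemma energy_ictm_step_le:
  assumes t: "\<tau> > 0" and lam: "lam \<ge> 0"
    and F1: "integrable (lebesgue_on Omega) (F1 f \<theta>)" and F2: "integrable (lebesgue_on Omega) (F2 f \<theta>)"
    and w: "bounded_measurable (lebesgue_on Omega) w" "\<And>x. x \<in> Omega \<Longrightarrow> w x \<in> {0, 1}"
    and v: "\<And>x. x \<in> Omega \<Longrightarrow> v x = (if ictm_phi \<tau> lam F1 F2 f w \<theta> x \<le> 0 then 1 else 0)"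
  shows "energy \<tau> lam F1 F2 f v \<theta> \<le> energy \<tau> lam F1 F2 f w \<theta>"
proof -
  have \<phi>: "integrable (lebesgue_on Omega) (ictm_phi \<tau> lam F1 F2 f w \<theta>)"
    using t w(1) F1 F2 by (rule integrable_ictm_phi)
  have v_bm: "bounded_measurable (lebesgue_on Omega) v"
    using \<phi> v by (intro Omega.bounded_measurable_threshold) auto
  have "(\<integral>x. v x * ictm_phi \<tau> lam F1 F2 f w \<theta> x \<partial>lebesgue_on Omega)
          \<le> (\<integral>x. w x * ictm_phi \<tau> lam F1 F2 f w \<theta> x \<partial>lebesgue_on Omega)"
    using Omega.integral_threshold_le[OF \<phi> _ w] v by simp
  moreover have "lam * sqrt (pi / \<tau>) * (heat_form \<tau> v (\<lambda>y. 1 - v y) - heat_form \<tau> w (\<lambda>y. 1 - w y))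
      \<le> lam * sqrt (pi / \<tau>) * (heat_form \<tau> v (\<lambda>y. 1 - 2 * w y) - heat_form \<tau> w (\<lambda>y. 1 - 2 * w y))"
    using t lam by (intro mult_left_mono heat_form_perimeter_le_linearization v_bm w) simp_all
  ultimately show ?thesis
    unfolding energy_eq_heat_form
    using integral_mult_ictm_phi[where ?F1.0=F1 and ?F2.0=F2 and f=f and \<theta>=\<theta>, OF t v_bm w(1) F1 F2]
      integral_mult_ictm_phi[where ?F1.0=F1 and ?F2.0=F2 and f=f and \<theta>=\<theta>, OF t w(1) w(1) F1 F2]
    by (simp add: algebra_simps)
qed

theorem theorem1:
  fixes \<tau> lam :: real
    and f :: 'i
    and S :: "'p set"
    and F1 F2 :: "'i \<Rightarrow> 'p \<Rightarrow> real \<times> real \<Rightarrow> real"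
    and u :: "nat \<Rightarrow> real \<times> real \<Rightarrow> real"
    and \<Theta> :: "nat \<Rightarrow> 'p"
  assumes tau_pos: "\<tau> > 0"
    and lambda_pos: "lam > 0"
    and F1_L1: "\<And>\<theta>. \<theta> \<in> S \<Longrightarrow> integrable (lebesgue_on Omega) (F1 f \<theta>)"
    and F2_L1: "\<And>\<theta>. \<theta> \<in> S \<Longrightarrow> integrable (lebesgue_on Omega) (F2 f \<theta>)"
    and u1_meas: "u 1 \<in> borel_measurable (lebesgue_on Omega)"
    and u1_binary: "\<And>x. x \<in> Omega \<Longrightarrow> u 1 x \<in> {0, 1}"
    and step1: "\<And>k. k \<ge> 1 \<Longrightarrow> \<Theta> k \<in> S \<and>
                  (\<forall>\<theta>\<in>S. fidelity F1 F2 f (u k) (\<Theta> k) \<le> fidelity F1 F2 f (u k) \<theta>)"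
    and step3: "\<And>k x. k \<ge> 1 \<Longrightarrow> x \<in> Omega \<Longrightarrow>
                  u (k + 1) x = (if ictm_phi \<tau> lam F1 F2 f (u k) (\<Theta> k) x \<le> 0 then 1 else 0)"
  shows "\<forall>k\<ge>1. energy \<tau> lam F1 F2 f (u (k + 1)) (\<Theta> (k + 1))
                 \<le> energy \<tau> lam F1 F2 f (u k) (\<Theta> k)"
proof (intro allI impI)
  have F_L1: "integrable (lebesgue_on Omega) (F1 f (\<Theta> k))" "integrable (lebesgue_on Omega) (F2 f (\<Theta> k))"
    if "k \<ge> 1" for k
    using step1[OF that] F1_L1 F2_L1 by blast+
  have binary: "bounded_measurable (lebesgue_on Omega) (u k) \<and> (\<forall>x\<in>Omega. u k x \<in> {0, 1})" if "k \<ge> 1" for k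
    using that
  proof (induction k rule: dec_induct)
    case base
    have "\<forall>x\<in>Omega. \<bar>u 1 x\<bar> \<le> 1" using u1_binary by fastforce
    thus ?case using u1_meas u1_binary unfolding bounded_measurable_def by auto
  next
    case (step k)
    have "integrable (lebesgue_on Omega) (ictm_phi \<tau> lam F1 F2 f (u k) (\<Theta> k))"
      using tau_pos step.IH F_L1[OF step.hyps(1)] by (intro integrable_ictm_phi) auto
    hence "bounded_measurable (lebesgue_on Omega) (u (Suc k))"
      using step3[OF step.hyps(1)] by (intro Omega.bounded_measurable_threshold) auto
    thus ?case using step3[OF step.hyps(1)] by simp
  qed
  fix k :: nat assume k: "k \<ge> 1"
  have "energy \<tau> lam F1 F2 f (u (k + 1)) (\<Theta> (k + 1)) \<le> energy \<tau> lam F1 F2 f (u (k + 1)) (\<Theta> k)"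
    using step1[of "k + 1"] step1[OF k] by (simp add: energy_eq_heat_form)
  also have "\<dots> \<le> energy \<tau> lam F1 F2 f (u k) (\<Theta> k)"
    using tau_pos lambda_pos F_L1[OF k] binary[OF k] step3[OF k]
    by (intro energy_ictm_step_le) auto
  finally show "energy \<tau> lam F1 F2 f (u (k + 1)) (\<Theta> (k + 1)) \<le> energy \<tau> lam F1 F2 f (u k) (\<Theta> k)" .
qed

end
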